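(* For every $J\subseteq[n]$ and every $i\in[n]$, the element $q_{J,i}$ lies in $SI^B_n$. Moreover $q_{J,i}\in\bigoplus_{K:\,|K|=|J|,\ J\le_{\mathrm{Gale}}K}\mathbb C[\mathbf x_n]\cdot\theta_K$, and its component in $\mathbb C[\mathbf x_n]\cdot\theta_J$ equals $\pm\,p_{J,i}\cdot\theta_J$.
   Context: Let $n\ge1$, $\mathbb C[\mathbf x_n]=\mathbb C[x_1,\dots,x_n]$. The superspace is $\Omega_n=\mathbb C[\mathbf x_n]\otimes\wedge\{\theta_1,\dots,\theta_n\}$: the $\theta_i$ anticommute among themselves and commute with the $x_j$. For $J=\{j_1<\dots<j_k\}\subseteq[n]$, $\theta_J=\theta_{j_1}\cdots\theta_{j_k}$; every element of $\Omega_n$ is uniquely $\sum_J f_J\theta_J$ with $f_J\in\mathbb C[\mathbf x_n]$. The group $\mathfrak B_n$ of signed permutations (bijections $\pi$ of $\{\pm1,\dots,\pm n\}$ with $\pi(-i)=-\pi(i)$) acts on $\Omega_n$ by algebra automorphisms via $\pi(x_i)=x_{\pi(i)}$, $\pi(\theta_i)=\theta_{\pi(i)}$, with $x_{-i}=-x_i$, $\theta_{-i}=-\theta_i$. $SI^B_n$ is the ideal of $\Omega_n$ generated by the $\mathfrak B_n$-invariant elements with zero constant term. The operator $\partial_i$ acts on $\Omega_n$ as $\partial/\partial x_i$, treating the $\theta$'s as constants, and $d(f)=\sum_{i=1}^n\partial_i(f)\,\theta_i$. Gale order: for subsets of equal size $\{a_1<\dots<a_r\}\le_{\mathrm{Gale}}\{b_1<\dots<b_r\}$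 iff $a_s\le b_s$ for all $s$. For $S\subseteq[n]$ and an integer $r$, $h^2_r(S)$ is the complete homogeneous symmetric polynomial of degree $r$ in the variables $\{x_s^2:s\in S\}$ (with $h^2_0(S)=1$ and $h^2_r(S)=0$ for $r<0$). For $J\subseteq[n]$ and $i\in[n]$ put $r_i=n-|J\cup\{i,\dots,n\}|+1$, and define $q_{J,i}=h^2_{r_i}(J\cup\{i,\dots,n\})\cdot\theta_J$ if $i\notin J$, $q_{J,i}=d\big(h^2_{r_i}(J\cup\{i,\dots,n\})\big)\cdot\theta_{J\setminus\{i\}}$ if $i\in J$; and $p_{J,i}=h^2_{r_i}(J\cup\{i,\dots,n\})$ if $i\notin J$, $p_{J,i}=\partial_i h^2_{r_i}(J\cup\{i,\dots,n\})$ if $i\in J$. *)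

theory Defs
  imports Complex_Main "HOL-Library.Poly_Mapping"
begin

text \<open>A monomial is an exponent vector nat =>0 nat (variable x_i has index i, i >= 1);
  a polynomial is a finitely supported map from monomials to complex coefficients,
  with the convolution product from HOL-Library.Poly_Mapping.\<close>

type_synonym mpoly = "(nat \<Rightarrow>\<^sub>0 nat) \<Rightarrow>\<^sub>0 complex"

definition Const :: "complex \<Rightarrow> mpoly" where
  "Const c = Poly_Mapping.single 0 c"

definition Var :: "nat \<Rightarrow> mpoly" where
  "Var i = Poly_Mapping.single (Poly_Mapping.single i 1) 1"

definition in_polyring :: "nat \<Rightarrow> mpoly \<Rightarrow> bool" where
  "in_polyring n p \<longleftrightarrow> (\<forall>m \<in> Poly_Mapping.keys p. Poly_Mapping.keys m \<subseteq> {1..n})"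

definition subst :: "(nat \<Rightarrow> mpoly) \<Rightarrow> mpoly \<Rightarrow> mpoly" where
  "subst s p = (\<Sum>m \<in> Poly_Mapping.keys p.
      Const (Poly_Mapping.lookup p m) *
      (\<Prod>i \<in> Poly_Mapping.keys m. s i ^ Poly_Mapping.lookup m i))"

definition pd :: "nat \<Rightarrow> mpoly \<Rightarrow> mpoly" where
  "pd i p = (\<Sum>m \<in> Poly_Mapping.keys p.
      Poly_Mapping.single (m - Poly_Mapping.single i 1)
        (of_nat (Poly_Mapping.lookup m i) * Poly_Mapping.lookup p m))"

text \<open>h^2_r(S): complete homogeneous symmetric polynomial of degree r in the x_s^2, s in S\<close>
definition h2 :: "int \<Rightarrow> nat set \<Rightarrow> mpoly" where
  "h2 r S = (if r < 0 then 0 else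
     (\<Sum>m \<in> {m :: nat \<Rightarrow>\<^sub>0 nat. Poly_Mapping.keys m \<subseteq> S \<and>
                             (\<Sum>s\<in>S. Poly_Mapping.lookup m s) = nat r}.
        (\<Prod>s\<in>S. Var s ^ (2 * Poly_Mapping.lookup m s))))"

text \<open>An element sum_J f_J theta_J is represented by its coefficient function J |-> f_J.\<close>

type_synonym sup = "nat set \<Rightarrow> mpoly"

definition omega :: "nat \<Rightarrow> sup \<Rightarrow> bool" where
  "omega n F \<longleftrightarrow> (\<forall>J. F J \<noteq> 0 \<longrightarrow> J \<subseteq> {1..n}) \<and> (\<forall>J. in_polyring n (F J))"

definition szero :: sup where "szero = (\<lambda>_. 0)"

definition sadd :: "sup \<Rightarrow> sup \<Rightarrow> sup" where "sadd F G = (\<lambda>K. F K + G K)"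

definition sneg :: "sup \<Rightarrow> sup" where "sneg F = (\<lambda>K. - F K)"

text \<open>theta_J (J ordered increasingly)\<close>
definition theta :: "nat set \<Rightarrow> sup" where
  "theta J = (\<lambda>K. if K = J then 1 else 0)"

definition emb :: "mpoly \<Rightarrow> sup" where
  "emb f = (\<lambda>K. if K = {} then f else 0)"

text \<open>sign with theta_I theta_J = ssign I J theta_(I Un J) for disjoint I, J\<close>
definition ssign :: "nat set \<Rightarrow> nat set \<Rightarrow> int" where
  "ssign I J = (-1) ^ card {(a, b). a \<in> I \<and> b \<in> J \<and> b < a}"

definition smult :: "sup \<Rightarrow> sup \<Rightarrow> sup" where
  "smult F G = (\<lambda>K. \<Sum>I \<in> Pow K. of_int (ssign I (K - I)) * F I * G (K - I))"

definition signed_perm :: "nat \<Rightarrow> (int \<Rightarrow> int) \<Rightarrow> bool" where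
  "signed_perm n \<pi> \<longleftrightarrow>
     bij_betw \<pi> {i. 1 \<le> \<bar>i\<bar> \<and> \<bar>i\<bar> \<le> int n} {i. 1 \<le> \<bar>i\<bar> \<and> \<bar>i\<bar> \<le> int n} \<and>
     (\<forall>i. 1 \<le> \<bar>i\<bar> \<and> \<bar>i\<bar> \<le> int n \<longrightarrow> \<pi> (- i) = - \<pi> i)"

definition xvar :: "int \<Rightarrow> mpoly" where
  "xvar k = (if k > 0 then Var (nat k) else - Var (nat (- k)))"

definition thvar :: "int \<Rightarrow> sup" where
  "thvar k = (if k > 0 then theta {nat k} else sneg (theta {nat (- k)}))"

text \<open>pi(f theta_{j1}...theta_{jk}) = pi(f) theta_{pi j1} ... theta_{pi jk}\<close>
definition act :: "nat \<Rightarrow> (int \<Rightarrow> int) \<Rightarrow> sup \<Rightarrow> sup" where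
  "act n \<pi> F = (\<lambda>K. \<Sum>J \<in> Pow {1..n}.
      smult (emb (subst (\<lambda>i. xvar (\<pi> (int i))) (F J)))
            (foldr smult (map (\<lambda>j. thvar (\<pi> (int j))) (sorted_list_of_set J)) (theta {})) K)"

definition B_invariant :: "nat \<Rightarrow> sup \<Rightarrow> bool" where
  "B_invariant n g \<longleftrightarrow> omega n g \<and> (\<forall>\<pi>. signed_perm n \<pi> \<longrightarrow> act n \<pi> g = g)"

definition const_term :: "sup \<Rightarrow> complex" where
  "const_term g = Poly_Mapping.lookup (g {}) 0"

inductive SI_B :: "nat \<Rightarrow> sup \<Rightarrow> bool" for n where
  zero: "SI_B n szero"
| gen: "\<lbrakk>B_invariant n g; const_term g = 0; omega n a; omega n b; SI_B n F\<rbrakk>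
          \<Longrightarrow> SI_B n (sadd (smult a (smult g b)) F)"

definition dd :: "nat \<Rightarrow> mpoly \<Rightarrow> sup" where
  "dd n f = (\<lambda>K. \<Sum>i\<in>{1..n}. smult (emb (pd i f)) (theta {i}) K)"

definition gale :: "nat set \<Rightarrow> nat set \<Rightarrow> bool" where
  "gale A B \<longleftrightarrow> card A = card B \<and>
     (\<forall>s < card A. sorted_list_of_set A ! s \<le> sorted_list_of_set B ! s)"

definition rr :: "nat \<Rightarrow> nat set \<Rightarrow> nat \<Rightarrow> int" where
  "rr n J i = int n - int (card (J \<union> {i..n})) + 1"

definition qq :: "nat \<Rightarrow> nat set \<Rightarrow> nat \<Rightarrow> sup" where
  "qq n J i = (if i \<notin> J then smult (emb (h2 (rr n J i) (J \<union> {i..n}))) (theta J)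
               else smult (dd n (h2 (rr n J i) (J \<union> {i..n}))) (theta (J - {i})))"

definition pp :: "nat \<Rightarrow> nat set \<Rightarrow> nat \<Rightarrow> mpoly" where
  "pp n J i = (if i \<notin> J then h2 (rr n J i) (J \<union> {i..n})
               else pd i (h2 (rr n J i) (J \<union> {i..n})))"

end

theory Submission
  imports Defs "HOL-Library.FuncSet"
begin

text \<open>
  The polynomials h^2_j([n]), j \<ge> 1, are invariant under signed permutations, and so is
  d h^2_j([n]): a signed permutation renames the variables up to sign, and by the chain rule such a
  renaming commutes with d up to the same signs. By the Leibniz rule for d, the polynomials f such
  that c f \<theta>_L and d(c f) \<theta>_L lie in SI^B_n for all c and L form an ideal of C[x_n],
  which therefore contains every h^2_j([n]) with j \<ge> 1. The recurrence
  h^2_j(S) = h^2_j(S \<union> {t}) - x_t^2 h^2_(j-1)(S \<union> {t}) puts h^2_j(S) into this ideal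
  whenever j + |S| > n, in particular h = h^2_(r_i)(J \<union> {i..n}); hence q_(J,i) \<in> SI^B_n.
  Since h involves only the variables indexed by J \<union> {i..n}, the element d h \<theta>_(J - {i})
  has components only at (J - {i}) \<union> {l} with l = i or l \<ge> i outside J, and exchanging i for
  such an l moves J up in Gale order.
\<close>

lemma poly_mapping_eq_sum_single:
  "(p :: 'a \<Rightarrow>\<^sub>0 'b :: comm_monoid_add) =
     (\<Sum>m\<in>Poly_Mapping.keys p. Poly_Mapping.single m (Poly_Mapping.lookup p m))"
  by (rule poly_mapping_eqI) (simp add: lookup_sum lookup_single when_def in_keys_iff)

lemma pd_eq_sum_over:
  assumes "finite A" "Poly_Mapping.keys p \<subseteq> A"
  shows "pd i p = (\<Sum>m\<in>A. Poly_Mapping.single (m - Poly_Mapping.single i 1)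
                      (of_nat (Poly_Mapping.lookup m i) * Poly_Mapping.lookup p m))"
  unfolding pd_def using assms by (intro sum.mono_neutral_left) (auto simp: in_keys_iff)

lemma pd_add: "pd i (p + q) = pd i p + pd i q"
proof -
  let ?A = "Poly_Mapping.keys p \<union> Poly_Mapping.keys q"
  have "pd i (p + q) = (\<Sum>m\<in>?A. Poly_Mapping.single (m - Poly_Mapping.single i 1)
          (of_nat (Poly_Mapping.lookup m i) * Poly_Mapping.lookup (p + q) m))"
    by (rule pd_eq_sum_over) (auto dest: set_mp[OF keys_add])
  also have "\<dots> = pd i p + pd i q"
    by (subst (1 2) pd_eq_sum_over[of ?A])
       (auto simp: lookup_add distrib_left single_add sum.distrib)
  finally show ?thesis .
qed

lemma pd_zero [simp]: "pd i 0 = 0"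
  by (simp add: pd_def)

lemma pd_uminus: "pd i (- p) = - pd i p"
  by (simp add: pd_def single_uminus sum_negf)

lemma pd_sum: "pd i (sum f A) = (\<Sum>x\<in>A. pd i (f x))"
  by (induction A rule: infinite_finite_induct) (auto simp: pd_add)

lemma pd_single:
  "pd i (Poly_Mapping.single m c) =
     Poly_Mapping.single (m - Poly_Mapping.single i 1) (of_nat (Poly_Mapping.lookup m i) * c)"
  by (subst pd_eq_sum_over[of "{m}"]) auto

lemma single_mult_minus_single:
  fixes a b :: "nat \<Rightarrow>\<^sub>0 nat"
  assumes "Poly_Mapping.lookup a i \<noteq> 0"
  shows "Poly_Mapping.single (a - Poly_Mapping.single i 1) c * Poly_Mapping.single b d
           = Poly_Mapping.single (a + b - Poly_Mapping.single i 1) (c * d :: complex)"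
proof -
  have "a - Poly_Mapping.single i 1 + b = a + b - Poly_Mapping.single i (1 :: nat)"
    by (rule poly_mapping_eqI)
       (use assms in \<open>auto simp: minus_poly_mapping.rep_eq lookup_add lookup_single when_def\<close>)
  then show ?thesis by (simp add: mult_single)
qed

lemma pd_mult_single:
  "pd i (Poly_Mapping.single a c * Poly_Mapping.single b d :: mpoly) =
     pd i (Poly_Mapping.single a c) * Poly_Mapping.single b d
     + Poly_Mapping.single a c * pd i (Poly_Mapping.single b d)"
proof -
  let ?e = "Poly_Mapping.single i (1 :: nat)" and ?la = "Poly_Mapping.lookup a i"
    and ?lb = "Poly_Mapping.lookup b i"
  have left: "pd i (Poly_Mapping.single a c) * Poly_Mapping.single b d
      = Poly_Mapping.single (a + b - ?e) (of_nat ?la * c * d)"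
  proof (cases "?la = 0")
    case False
    then show ?thesis by (simp only: pd_single single_mult_minus_single[OF False])
  qed (simp add: pd_single)
  have right: "Poly_Mapping.single a c * pd i (Poly_Mapping.single b d)
      = Poly_Mapping.single (a + b - ?e) (of_nat ?lb * c * d)"
  proof (cases "?lb = 0")
    case False
    have "Poly_Mapping.single a c * pd i (Poly_Mapping.single b d)
        = Poly_Mapping.single (b - ?e) (of_nat ?lb * d) * Poly_Mapping.single a c"
      by (simp only: pd_single mult.commute)
    also have "\<dots> = Poly_Mapping.single (b + a - ?e) (of_nat ?lb * d * c)"
      by (rule single_mult_minus_single[OF False])
    finally show ?thesis by (simp add: add.commute mult_ac)
  qed (simp add: pd_single)
  have "pd i (Poly_Mapping.single a c * Poly_Mapping.single b d)
      = Poly_Mapping.single (a + b - ?e) (of_nat ?la * c * d + of_nat ?lb * c * d)"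
    by (simp add: mult_single pd_single lookup_add algebra_simps)
  then show ?thesis
    by (simp add: left right single_add)
qed

lemma pd_mult: "pd i (p * q :: mpoly) = pd i p * q + p * pd i q"
proof -
  let ?s = "\<lambda>p m. Poly_Mapping.single m (Poly_Mapping.lookup p m)"
  have "p * q = (\<Sum>a\<in>Poly_Mapping.keys p. \<Sum>b\<in>Poly_Mapping.keys q. ?s p a * ?s q b)"
    by (subst (1 2) poly_mapping_eq_sum_single) (simp add: sum_product)
  then have "pd i (p * q) = (\<Sum>a\<in>Poly_Mapping.keys p. \<Sum>b\<in>Poly_Mapping.keys q.
       pd i (?s p a) * ?s q b + ?s p a * pd i (?s q b))"
    by (simp add: pd_sum pd_mult_single)
  also have "\<dots> = (\<Sum>a\<in>Poly_Mapping.keys p. pd i (?s p a)) * (\<Sum>b\<in>Poly_Mapping.keys q. ?s q b)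
      + (\<Sum>a\<in>Poly_Mapping.keys p. ?s p a) * (\<Sum>b\<in>Poly_Mapping.keys q. pd i (?s q b))"
    by (simp add: sum.distrib sum_product)
  also have "\<dots> = pd i p * q + p * pd i q"
    by (simp flip: pd_sum poly_mapping_eq_sum_single)
  finally show ?thesis .
qed

lemma pd_Const [simp]: "pd i (Const c) = 0"
  by (simp add: Const_def pd_single)

lemma pd_Var: "pd i (Var j) = (if i = j then 1 else 0)"
  by (simp add: Var_def pd_single lookup_single when_def)

lemma Const_zero [simp]: "Const 0 = 0"
  by (simp add: Const_def)

lemma Const_one [simp]: "Const 1 = 1"
  by (simp add: Const_def)

lemma Const_mult: "Const (a * b) = Const a * Const b"
  by (simp add: Const_def mult_single)

lemma Const_add: "Const (a + b) = Const a + Const b"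
  by (simp add: Const_def single_add)

lemma Const_eq_0_iff: "Const c = 0 \<longleftrightarrow> c = 0"
  by (metis Const_def lookup_single_eq single_zero)

lemma prod_power_keys_eq_prod_over:
  assumes "finite A" "Poly_Mapping.keys m \<subseteq> A"
  shows "(\<Prod>i\<in>Poly_Mapping.keys m. (s i :: mpoly) ^ Poly_Mapping.lookup m i)
           = (\<Prod>i\<in>A. s i ^ Poly_Mapping.lookup m i)"
  using assms by (intro prod.mono_neutral_left) (auto simp: in_keys_iff)

lemma subst_eq_sum_over:
  assumes "finite A" "Poly_Mapping.keys p \<subseteq> A"
  shows "subst s p = (\<Sum>m\<in>A. Const (Poly_Mapping.lookup p m) *
                        (\<Prod>i\<in>Poly_Mapping.keys m. s i ^ Poly_Mapping.lookup m i))"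
  unfolding subst_def using assms by (intro sum.mono_neutral_left) (auto simp: in_keys_iff)

lemma subst_add: "subst s (p + q) = subst s p + subst s q"
proof -
  let ?A = "Poly_Mapping.keys p \<union> Poly_Mapping.keys q"
  have "subst s (p + q) = (\<Sum>m\<in>?A. Const (Poly_Mapping.lookup (p + q) m) *
          (\<Prod>i\<in>Poly_Mapping.keys m. s i ^ Poly_Mapping.lookup m i))"
    by (rule subst_eq_sum_over) (auto dest: set_mp[OF keys_add])
  also have "\<dots> = subst s p + subst s q"
    by (subst (1 2) subst_eq_sum_over[of ?A])
       (auto simp: lookup_add distrib_right Const_add sum.distrib)
  finally show ?thesis .
qed

lemma subst_zero [simp]: "subst s 0 = 0"
  by (simp add: subst_def)

lemma subst_sum: "subst s (sum f A) = (\<Sum>x\<in>A. subst s (f x))"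
  by (induction A rule: infinite_finite_induct) (auto simp: subst_add)

lemma subst_single:
  "subst s (Poly_Mapping.single m c) =
     Const c * (\<Prod>i\<in>Poly_Mapping.keys m. s i ^ Poly_Mapping.lookup m i)"
  by (subst subst_eq_sum_over[of "{m}"]) auto

lemma subst_mult_single:
  "subst s (Poly_Mapping.single a c * Poly_Mapping.single b d) =
     subst s (Poly_Mapping.single a c) * subst s (Poly_Mapping.single b d)"
proof -
  let ?A = "Poly_Mapping.keys a \<union> Poly_Mapping.keys b"
  have fin: "finite ?A" by simp
  have "subst s (Poly_Mapping.single a c * Poly_Mapping.single b d) =
      Const (c * d) * (\<Prod>i\<in>?A. s i ^ Poly_Mapping.lookup (a + b) i)"
    by (simp only: mult_single subst_single prod_power_keys_eq_prod_over[OF fin keys_add])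
  also have "\<dots> = (Const c * (\<Prod>i\<in>?A. s i ^ Poly_Mapping.lookup a i))
                 * (Const d * (\<Prod>i\<in>?A. s i ^ Poly_Mapping.lookup b i))"
    by (simp add: Const_mult lookup_add power_add prod.distrib mult_ac)
  also have "\<dots> = subst s (Poly_Mapping.single a c) * subst s (Poly_Mapping.single b d)"
    by (simp only: subst_single prod_power_keys_eq_prod_over[OF fin] Un_upper1 Un_upper2)
  finally show ?thesis .
qed

lemma subst_mult: "subst s (p * q :: mpoly) = subst s p * subst s q"
proof -
  let ?s = "\<lambda>p m. Poly_Mapping.single m (Poly_Mapping.lookup p m)"
  have "p * q = (\<Sum>a\<in>Poly_Mapping.keys p. \<Sum>b\<in>Poly_Mapping.keys q. ?s p a * ?s q b)"
    by (subst (1 2) poly_mapping_eq_sum_single) (simp add: sum_product)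
  then have "subst s (p * q) = (\<Sum>a\<in>Poly_Mapping.keys p. \<Sum>b\<in>Poly_Mapping.keys q.
       subst s (?s p a) * subst s (?s q b))"
    by (simp add: subst_sum subst_mult_single)
  also have "\<dots> = (\<Sum>a\<in>Poly_Mapping.keys p. subst s (?s p a))
                 * (\<Sum>b\<in>Poly_Mapping.keys q. subst s (?s q b))"
    by (simp add: sum_product)
  also have "\<dots> = subst s p * subst s q"
    by (simp flip: subst_sum poly_mapping_eq_sum_single)
  finally show ?thesis .
qed

lemma subst_Const [simp]: "subst s (Const c) = Const c"
  using subst_single[of s 0 c] by (simp add: Const_def)

lemma subst_one [simp]: "subst s 1 = 1"
  using subst_Const[of s 1] by (simp add: Const_def)

lemma subst_Var [simp]: "subst s (Var i) = s i"
  by (simp add: Var_def subst_single)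

lemma subst_power: "subst s (p ^ k) = subst s p ^ k"
  by (induction k) (auto simp: subst_mult)

lemma subst_zero_vars: "subst (\<lambda>_. 0) p = Const (Poly_Mapping.lookup p 0)"
proof -
  have "subst (\<lambda>_. 0) p
      = (\<Sum>m\<in>Poly_Mapping.keys p. if m = 0 then Const (Poly_Mapping.lookup p 0) else 0)"
    unfolding subst_def
  proof (intro sum.cong refl)
    fix m
    show "Const (Poly_Mapping.lookup p m) * (\<Prod>i\<in>Poly_Mapping.keys m. 0 ^ Poly_Mapping.lookup m i)
          = (if m = 0 then Const (Poly_Mapping.lookup p 0) else 0)"
    proof (cases "m = 0")
      case False
      then obtain i where "i \<in> Poly_Mapping.keys m" by (metis keys_eq_empty ex_in_conv)
      then have "(\<Prod>i\<in>Poly_Mapping.keys m. (0 :: mpoly) ^ Poly_Mapping.lookup m i) = 0"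
        by (intro prod_zero) (auto simp: in_keys_iff)
      with False show ?thesis by simp
    qed simp
  qed
  also have "\<dots> = Const (Poly_Mapping.lookup p 0)"
    by (auto simp: in_keys_iff)
  finally show ?thesis .
qed

definition vars_in :: "nat set \<Rightarrow> mpoly \<Rightarrow> bool" where
  "vars_in V p \<longleftrightarrow> (\<forall>m\<in>Poly_Mapping.keys p. Poly_Mapping.keys m \<subseteq> V)"

lemma in_polyring_iff_vars_in: "in_polyring n p \<longleftrightarrow> vars_in {1..n} p"
  by (simp add: in_polyring_def vars_in_def)

lemma vars_in_add: "vars_in V p \<Longrightarrow> vars_in V q \<Longrightarrow> vars_in V (p + q)"
  unfolding vars_in_def using keys_add[of p q] by blast

lemma vars_in_uminus: "vars_in V p \<Longrightarrow> vars_in V (- p)"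
  by (simp add: vars_in_def)

lemma vars_in_zero [simp]: "vars_in V 0"
  by (simp add: vars_in_def)

lemma vars_in_one [simp]: "vars_in V 1"
  by (simp add: vars_in_def)

lemma vars_in_Var: "i \<in> V \<Longrightarrow> vars_in V (Var i)"
  by (simp add: vars_in_def Var_def)

lemma vars_in_mult:
  assumes "vars_in V p" "vars_in V q"
  shows "vars_in V (p * q)"
  unfolding vars_in_def
proof
  fix m assume "m \<in> Poly_Mapping.keys (p * q)"
  then obtain a b where "m = a + b" "a \<in> Poly_Mapping.keys p" "b \<in> Poly_Mapping.keys q"
    using keys_mult[of p q] by blast
  then show "Poly_Mapping.keys m \<subseteq> V"
    using assms keys_add[of a b] unfolding vars_in_def by blast
qed

lemma vars_in_sum: "(\<And>x. x \<in> A \<Longrightarrow> vars_in V (f x)) \<Longrightarrow> vars_in V (sum f A)"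
  by (induction A rule: infinite_finite_induct) (auto intro: vars_in_add)

lemma vars_in_prod: "(\<And>x. x \<in> A \<Longrightarrow> vars_in V (f x)) \<Longrightarrow> vars_in V (prod f A)"
  by (induction A rule: infinite_finite_induct) (auto intro: vars_in_mult)

lemma vars_in_power: "vars_in V p \<Longrightarrow> vars_in V (p ^ k)"
  by (induction k) (auto intro: vars_in_mult)

lemma vars_in_pd: "vars_in V p \<Longrightarrow> vars_in V (pd i p)"
  unfolding pd_def
proof (rule vars_in_sum)
  fix m assume "vars_in V p" "m \<in> Poly_Mapping.keys p"
  moreover have "Poly_Mapping.keys (m - Poly_Mapping.single i 1) \<subseteq> Poly_Mapping.keys m"
    by (auto simp: in_keys_iff minus_poly_mapping.rep_eq)
  ultimately show "vars_in V (Poly_Mapping.single (m - Poly_Mapping.single i 1)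
                     (of_nat (Poly_Mapping.lookup m i) * Poly_Mapping.lookup p m))"
    by (auto simp: vars_in_def)
qed

lemma pd_eq_0_if_not_vars_in: "vars_in V p \<Longrightarrow> l \<notin> V \<Longrightarrow> pd l p = 0"
  unfolding pd_def vars_in_def
  by (intro sum.neutral ballI) (metis mult_eq_0_iff not_in_keys_iff_lookup_eq_zero
      of_nat_eq_0_iff single_zero subsetD)

section \<open>Complete homogeneous polynomials in the squares\<close>

definition exps :: "nat set \<Rightarrow> nat \<Rightarrow> (nat \<Rightarrow>\<^sub>0 nat) set" where
  "exps S k = {m. Poly_Mapping.keys m \<subseteq> S \<and> (\<Sum>s\<in>S. Poly_Mapping.lookup m s) = k}"

definition sq_monomial :: "nat set \<Rightarrow> (nat \<Rightarrow>\<^sub>0 nat) \<Rightarrow> mpoly" where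
  "sq_monomial S m = (\<Prod>s\<in>S. Var s ^ (2 * Poly_Mapping.lookup m s))"

lemma h2_int: "h2 (int j) S = (\<Sum>m\<in>exps S j. sq_monomial S m)"
  by (simp add: h2_def exps_def sq_monomial_def)

lemma finite_exps:
  assumes "finite S"
  shows "finite (exps S k)"
proof -
  let ?f = "\<lambda>g. Abs_poly_mapping (\<lambda>s. if s \<in> S then g s else 0)"
  have "exps S k \<subseteq> ?f ` (PiE S (\<lambda>_. {0..k}))"
  proof
    fix m assume m: "m \<in> exps S k"
    have "(\<lambda>s. if s \<in> S then restrict (Poly_Mapping.lookup m) S s else 0) = Poly_Mapping.lookup m"
      using m by (auto simp: exps_def in_keys_iff fun_eq_iff)
    then have "m = ?f (restrict (Poly_Mapping.lookup m) S)"
      by simp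
    moreover have "Poly_Mapping.lookup m s \<le> k" if "s \<in> S" for s
      using m assms that unfolding exps_def
      by (auto intro: member_le_sum[of _ S "Poly_Mapping.lookup m", simplified])
    then have "restrict (Poly_Mapping.lookup m) S \<in> PiE S (\<lambda>_. {0..k})"
      by auto
    ultimately show "m \<in> ?f ` (PiE S (\<lambda>_. {0..k}))" by blast
  qed
  moreover have "finite (PiE S (\<lambda>_. {0..k}))"
    using assms by (intro finite_PiE) auto
  ultimately show ?thesis by (meson finite_imageI finite_subset)
qed

lemma h2_empty: "h2 (int j) {} = (if j = 0 then 1 else 0)"
proof -
  have "exps {} j = (if j = 0 then {0} else {})"
    by (auto simp: exps_def)
  then show ?thesis by (simp add: h2_int sq_monomial_def)
qed

lemma sq_monomial_add_single:
  assumes "finite S" "t \<notin> S" "Poly_Mapping.lookup m t = 0"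
  shows "sq_monomial (insert t S) (m + Poly_Mapping.single t k) = Var t ^ (2 * k) * sq_monomial S m"
proof -
  have "sq_monomial S (m + Poly_Mapping.single t k) = sq_monomial S m"
    unfolding sq_monomial_def using assms(2)
    by (intro prod.cong refl) (auto simp: lookup_add lookup_single when_def)
  then show ?thesis
    using assms by (simp add: sq_monomial_def lookup_add)
qed

lemma bij_betw_exps_insert:
  assumes "finite S" "t \<notin> S"
  shows "bij_betw (\<lambda>(k, m). m + Poly_Mapping.single t k)
           (SIGMA k:{..j}. exps S (j - k)) (exps (insert t S) j)"
proof (rule bij_betw_byWitness[where
      f' = "\<lambda>m. (Poly_Mapping.lookup m t, m - Poly_Mapping.single t (Poly_Mapping.lookup m t))"],
    safe)
  fix k m assume k: "k \<le> j" and m: "m \<in> exps S (j - k)"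
  have sum_S: "(\<Sum>s\<in>S. Poly_Mapping.lookup (m + Poly_Mapping.single t k) s)
      = (\<Sum>s\<in>S. Poly_Mapping.lookup m s)"
    using assms(2) by (auto intro!: sum.cong simp: lookup_add lookup_single when_def)
  have t: "Poly_Mapping.lookup m t = 0"
    using m assms(2) by (auto simp: exps_def in_keys_iff)
  then show "Poly_Mapping.lookup (m + Poly_Mapping.single t k) t = k"
    "m + Poly_Mapping.single t k
       - Poly_Mapping.single t (Poly_Mapping.lookup (m + Poly_Mapping.single t k) t) = m"
    by (auto simp: lookup_add intro!: poly_mapping_eqI simp: minus_poly_mapping.rep_eq)
  show "m + Poly_Mapping.single t k \<in> exps (insert t S) j"
    using m k t assms keys_add[of m "Poly_Mapping.single t k"] sum_S
    by (auto simp: exps_def lookup_add split: if_splits)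
next
  fix m assume m: "m \<in> exps (insert t S) j"
  let ?m' = "m - Poly_Mapping.single t (Poly_Mapping.lookup m t)"
  show "?m' + Poly_Mapping.single t (Poly_Mapping.lookup m t) = m"
    by (auto intro!: poly_mapping_eqI
        simp: lookup_add minus_poly_mapping.rep_eq lookup_single when_def)
  have "Poly_Mapping.lookup m t + (\<Sum>s\<in>S. Poly_Mapping.lookup m s) = j"
    using m assms by (simp add: exps_def)
  moreover have "(\<Sum>s\<in>S. Poly_Mapping.lookup ?m' s) = (\<Sum>s\<in>S. Poly_Mapping.lookup m s)"
    using assms(2) by (auto intro!: sum.cong simp: minus_poly_mapping.rep_eq lookup_single when_def)
  moreover have "Poly_Mapping.keys ?m' \<subseteq> Poly_Mapping.keys m - {t}"
    by (auto simp: in_keys_iff minus_poly_mapping.rep_eq lookup_single when_def split: if_splits)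
  then have "Poly_Mapping.keys ?m' \<subseteq> S"
    using m by (auto simp: exps_def)
  ultimately show "Poly_Mapping.lookup m t \<le> j" "?m' \<in> exps S (j - Poly_Mapping.lookup m t)"
    by (auto simp: exps_def)
qed

lemma h2_insert:
  assumes "finite S" "t \<notin> S"
  shows "h2 (int j) (insert t S) = (\<Sum>k\<le>j. Var t ^ (2 * k) * h2 (int (j - k)) S)"
proof -
  let ?T = "SIGMA k:{..j}. exps S (j - k)"
  have "(\<Sum>k\<le>j. Var t ^ (2 * k) * h2 (int (j - k)) S)
      = (\<Sum>k\<le>j. \<Sum>m\<in>exps S (j - k). Var t ^ (2 * k) * sq_monomial S m)"
    by (simp only: h2_int sum_distrib_left)
  also have "\<dots> = (\<Sum>(k, m)\<in>?T. Var t ^ (2 * k) * sq_monomial S m)"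
    by (rule sum.Sigma) (auto intro: finite_exps assms)
  also have "\<dots> = (\<Sum>(k, m)\<in>?T. sq_monomial (insert t S) (m + Poly_Mapping.single t k))"
  proof (intro sum.cong refl)
    fix a assume "a \<in> ?T"
    then obtain k m where a: "a = (k, m)" and "m \<in> exps S (j - k)" by blast
    then have "Poly_Mapping.lookup m t = 0" using assms(2) by (auto simp: exps_def in_keys_iff)
    then show "(case a of (k, m) \<Rightarrow> Var t ^ (2 * k) * sq_monomial S m)
        = (case a of (k, m) \<Rightarrow> sq_monomial (insert t S) (m + Poly_Mapping.single t k))"
      by (simp add: a sq_monomial_add_single[OF assms])
  qed
  also have "\<dots> = (\<Sum>m\<in>exps (insert t S) j. sq_monomial (insert t S) m)"
    using sum.reindex_bij_betw[OF bij_betw_exps_insert[OF assms]]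
    by (simp add: case_prod_unfold)
  finally show ?thesis by (simp add: h2_int)
qed

lemma h2_insert_recurrence:
  assumes "finite S" "t \<notin> S" "j \<ge> 1"
  shows "h2 (int j) S = h2 (int j) (insert t S) - Var t ^ 2 * h2 (int (j - 1)) (insert t S)"
proof -
  obtain j' where j: "j = Suc j'" using assms(3) by (cases j) auto
  have "h2 (int j) (insert t S)
      = h2 (int j) S + (\<Sum>k\<le>j'. Var t ^ (2 * Suc k) * h2 (int (j - Suc k)) S)"
    unfolding h2_insert[OF assms(1,2)] j sum.atMost_Suc_shift by simp
  also have "(\<Sum>k\<le>j'. Var t ^ (2 * Suc k) * h2 (int (j - Suc k)) S)
      = Var t ^ 2 * h2 (int (j - 1)) (insert t S)"
    unfolding h2_insert[OF assms(1,2)] j sum_distrib_left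
  proof (rule sum.cong)
    fix k
    have "Var t ^ (2 * Suc k) = Var t ^ 2 * Var t ^ (2 * k)"
      by (simp flip: power_add)
    moreover have "Suc j' - Suc k = Suc j' - 1 - k" by simp
    ultimately show "Var t ^ (2 * Suc k) * h2 (int (Suc j' - Suc k)) S
        = Var t ^ 2 * (Var t ^ (2 * k) * h2 (int (Suc j' - 1 - k)) S)"
      by (simp only: mult.assoc)
  qed simp
  finally show ?thesis by simp
qed

lemma vars_in_h2:
  assumes "S \<subseteq> V"
  shows "vars_in V (h2 r S)"
proof (cases "r < 0")
  case False
  then have "h2 r S = h2 (int (nat r)) S" by simp
  then show ?thesis
    unfolding h2_int sq_monomial_def
    using assms by (auto intro!: vars_in_sum vars_in_prod vars_in_power vars_in_Var)
qed (simp add: h2_def)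

lemma lookup_h2_0:
  assumes "finite S" "j \<ge> 1"
  shows "Poly_Mapping.lookup (h2 (int j) S) 0 = 0"
proof -
  have "subst (\<lambda>_. 0) (h2 (int j) S) = 0"
    using assms
  proof (induction S arbitrary: j rule: finite_induct)
    case empty
    then show ?case by (simp add: h2_empty)
  next
    case (insert t S)
    show ?case unfolding h2_insert[OF insert(1,2)] subst_sum
    proof (intro sum.neutral ballI)
      fix k assume "k \<in> {..j}"
      show "subst (\<lambda>_. 0) (Var t ^ (2 * k) * h2 (int (j - k)) S) = 0"
        using insert by (cases "k = 0") (auto simp: subst_mult subst_power)
    qed
  qed
  then show ?thesis by (simp add: subst_zero_vars Const_eq_0_iff)
qed

section \<open>Signed renamings of variables\<close>

definition signed_renaming ::
    "nat set \<Rightarrow> (nat \<Rightarrow> nat) \<Rightarrow> (nat \<Rightarrow> mpoly) \<Rightarrow> (nat \<Rightarrow> mpoly) \<Rightarrow> bool" where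
  "signed_renaming V \<tau> e \<sigma> \<longleftrightarrow>
     inj_on \<tau> V \<and> (\<forall>i\<in>V. (e i = 1 \<or> e i = -1) \<and> \<sigma> i = e i * Var (\<tau> i))"

lemma signed_renaming_sign_sq: "signed_renaming V \<tau> e \<sigma> \<Longrightarrow> i \<in> V \<Longrightarrow> e i * e i = 1"
  by (auto simp: signed_renaming_def)

lemma h2_subst_signed_renaming:
  assumes "signed_renaming V \<tau> e \<sigma>" "S \<subseteq> V" "finite S"
  shows "subst \<sigma> (h2 (int j) S) = h2 (int j) (\<tau> ` S)"
  using assms(3,2)
proof (induction S arbitrary: j rule: finite_induct)
  case empty
  then show ?case by (simp add: h2_empty)
next
  case (insert t S)
  have "\<tau> t \<notin> \<tau> ` S"
    using insert assms(1) by (auto simp: signed_renaming_def inj_on_def)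
  moreover have sq: "\<sigma> t ^ (2 * k) = Var (\<tau> t) ^ (2 * k)" for k
  proof -
    have "\<sigma> t * \<sigma> t = (e t * e t) * (Var (\<tau> t) * Var (\<tau> t))"
      using insert(4) assms(1) by (auto simp: signed_renaming_def mult_ac)
    then show ?thesis
      using signed_renaming_sign_sq[OF assms(1), of t] insert(4)
      by (simp add: power_mult power2_eq_square)
  qed
  moreover have "subst \<sigma> (h2 (int j) (insert t S))
      = (\<Sum>k\<le>j. Var (\<tau> t) ^ (2 * k) * h2 (int (j - k)) (\<tau> ` S))"
  proof -
    have IH: "subst \<sigma> (h2 (int k) S) = h2 (int k) (\<tau> ` S)" for k
      using insert by simp
    show ?thesis
      unfolding h2_insert[OF insert(1,2)] subst_sum
      by (simp only: subst_mult subst_power subst_Var sq IH)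
  qed
  ultimately show ?case
    using h2_insert[of "\<tau> ` S" "\<tau> t" j] insert(1) by simp
qed

definition commutes_pd_subst ::
    "(nat \<Rightarrow> mpoly) \<Rightarrow> (nat \<Rightarrow> nat) \<Rightarrow> mpoly \<Rightarrow> nat \<Rightarrow> mpoly \<Rightarrow> bool" where
  "commutes_pd_subst \<sigma> \<tau> c l f \<longleftrightarrow> pd (\<tau> l) (subst \<sigma> f) = c * subst \<sigma> (pd l f)"

lemma commutes_pd_subst_mult:
  "commutes_pd_subst \<sigma> \<tau> c l f \<Longrightarrow> commutes_pd_subst \<sigma> \<tau> c l g \<Longrightarrow>
     commutes_pd_subst \<sigma> \<tau> c l (f * g)"
  by (simp add: commutes_pd_subst_def pd_mult subst_mult subst_add algebra_simps)

lemma commutes_pd_subst_one: "commutes_pd_subst \<sigma> \<tau> c l 1"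
  using pd_Const[of _ 1] by (simp add: commutes_pd_subst_def)

lemma commutes_pd_subst_sum:
  "(\<And>x. x \<in> A \<Longrightarrow> commutes_pd_subst \<sigma> \<tau> c l (f x)) \<Longrightarrow>
     commutes_pd_subst \<sigma> \<tau> c l (sum f A)"
  by (induction A rule: infinite_finite_induct)
     (simp_all add: commutes_pd_subst_def pd_add subst_add distrib_left)

lemma commutes_pd_subst_prod:
  "(\<And>x. x \<in> A \<Longrightarrow> commutes_pd_subst \<sigma> \<tau> c l (f x)) \<Longrightarrow>
     commutes_pd_subst \<sigma> \<tau> c l (prod f A)"
  by (induction A rule: infinite_finite_induct)
     (auto intro: commutes_pd_subst_mult commutes_pd_subst_one)

lemma commutes_pd_subst_power:
  "commutes_pd_subst \<sigma> \<tau> c l f \<Longrightarrow> commutes_pd_subst \<sigma> \<tau> c l (f ^ k)"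
  by (induction k) (auto intro: commutes_pd_subst_mult commutes_pd_subst_one)

lemma commutes_pd_subst_Var:
  assumes "signed_renaming V \<tau> e \<sigma>" "i \<in> V" "l \<in> V"
  shows "commutes_pd_subst \<sigma> \<tau> (e l) l (Var i)"
proof -
  have "pd (\<tau> l) (e i) = 0"
    using assms(1,2) pd_Const[of "\<tau> l" 1] by (auto simp: signed_renaming_def pd_uminus)
  then have "pd (\<tau> l) (\<sigma> i) = e i * (if \<tau> l = \<tau> i then 1 else 0)"
    using assms(1,2) by (simp add: signed_renaming_def pd_mult pd_Var)
  also have "\<dots> = e l * subst \<sigma> (pd l (Var i))"
    using assms by (auto simp: signed_renaming_def pd_Var inj_on_def)
  finally show ?thesis by (simp add: commutes_pd_subst_def)
qed

lemma pd_subst_h2_signed_renaming: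
  assumes "signed_renaming V \<tau> e \<sigma>" "S \<subseteq> V" "l \<in> V"
  shows "pd (\<tau> l) (subst \<sigma> (h2 (int j) S)) = e l * subst \<sigma> (pd l (h2 (int j) S))"
proof -
  have "commutes_pd_subst \<sigma> \<tau> (e l) l (h2 (int j) S)"
    unfolding h2_int sq_monomial_def
    by (intro commutes_pd_subst_sum commutes_pd_subst_prod commutes_pd_subst_power
        commutes_pd_subst_Var[OF assms(1) _ assms(3)]) (use assms(2) in auto)
  then show ?thesis by (simp add: commutes_pd_subst_def)
qed

definition mon :: "nat set \<Rightarrow> mpoly \<Rightarrow> sup" where
  "mon L y = (\<lambda>K. if K = L then y else 0)"

lemma theta_eq_mon: "theta L = mon L 1"
  by (simp add: theta_def mon_def)

lemma mon_add: "mon L (a + b) = sadd (mon L a) (mon L b)"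
  by (auto simp: mon_def sadd_def)

lemma sadd_szero: "sadd X szero = X"
  by (simp add: sadd_def szero_def)

lemma smult_infinite: "infinite K \<Longrightarrow> smult F G K = 0"
  by (simp add: smult_def)

lemma ssign_empty_left [simp]: "ssign {} K = 1"
  by (simp add: ssign_def)

lemma ssign_empty_right [simp]: "ssign K {} = 1"
  by (simp add: ssign_def)

lemma smult_emb_left: "finite K \<Longrightarrow> smult (emb a) X K = a * X K"
proof -
  assume K: "finite K"
  have "smult (emb a) X K = (\<Sum>I\<in>Pow K. if I = {} then a * X K else 0)"
    unfolding smult_def emb_def by (intro sum.cong refl) auto
  also have "\<dots> = a * X K" using K by simp
  finally show ?thesis .
qed

lemma smult_theta_empty_right: "finite K \<Longrightarrow> smult X (theta {}) K = X K"
proof -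
  assume K: "finite K"
  have "smult X (theta {}) K = (\<Sum>I\<in>Pow K. if I = K then X K else 0)"
    unfolding smult_def theta_def by (intro sum.cong refl) auto
  also have "\<dots> = X K" using K by simp
  finally show ?thesis .
qed

lemma smult_emb_mon: "finite L \<Longrightarrow> smult (emb f) (mon L y) = mon L (f * y)"
proof
  fix K assume "finite L"
  then show "smult (emb f) (mon L y) K = mon L (f * y) K"
    by (cases "finite K") (auto simp: smult_emb_left smult_infinite mon_def)
qed

lemma smult_emb_theta: "finite L \<Longrightarrow> smult (emb f) (theta L) = mon L f"
  by (simp add: theta_eq_mon smult_emb_mon)

lemma dd_eq_sum: "dd n f K = (\<Sum>l\<in>{1..n}. if K = {l} then pd l f else 0)"
  unfolding dd_def
proof (intro sum.cong refl)
  fix l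
  show "smult (emb (pd l f)) (theta {l}) K = (if K = {l} then pd l f else 0)"
    by (cases "finite K") (auto simp: smult_emb_left smult_infinite theta_def)
qed

lemma smult_dd_mon:
  assumes L: "finite L"
  shows "smult (dd n c) (mon L y) K =
    (\<Sum>l\<in>{1..n}. if l \<in> K \<and> K - {l} = L then of_int (ssign {l} L) * pd l c * y else 0)"
proof (cases "finite K")
  case False
  then have "l \<in> K \<Longrightarrow> K - {l} \<noteq> L" for l
    using L by (metis finite_insert insert_Diff)
  with False show ?thesis by (simp add: smult_infinite, intro sum.neutral) auto
next
  case K: True
  have "smult (dd n c) (mon L y) K = (\<Sum>I\<in>Pow K. \<Sum>l\<in>{1..n}.
      if I = {l} then of_int (ssign {l} (K - {l})) * pd l c * mon L y (K - {l}) else 0)"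
    unfolding smult_def dd_eq_sum sum_distrib_left sum_distrib_right
    by (intro sum.cong refl) simp
  also have "\<dots> = (\<Sum>l\<in>{1..n}. \<Sum>I\<in>Pow K.
      if I = {l} then of_int (ssign {l} (K - {l})) * pd l c * mon L y (K - {l}) else 0)"
    by (rule sum.swap)
  also have "\<dots> = (\<Sum>l\<in>{1..n}. if l \<in> K \<and> K - {l} = L then of_int (ssign {l} L) * pd l c * y else 0)"
    using K by (intro sum.cong refl) (auto simp: mon_def)
  finally show ?thesis .
qed

lemma smult_dd_theta:
  "finite L \<Longrightarrow> smult (dd n f) (theta L) K =
     (\<Sum>l\<in>{1..n}. if l \<in> K \<and> K - {l} = L then of_int (ssign {l} L) * pd l f else 0)"
  unfolding theta_eq_mon smult_dd_mon by (intro sum.cong refl) auto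

lemma smult_dd_mult_theta:
  assumes "finite L"
  shows "smult (dd n (c * f)) (theta L) =
     sadd (smult (dd n c) (smult (emb f) (theta L))) (smult (emb c) (smult (dd n f) (theta L)))"
proof
  fix K
  show "smult (dd n (c * f)) (theta L) K =
     sadd (smult (dd n c) (smult (emb f) (theta L))) (smult (emb c) (smult (dd n f) (theta L))) K"
  proof (cases "finite K")
    case False
    then show ?thesis by (simp add: smult_infinite sadd_def)
  next
    case True
    then show ?thesis
      using assms
      by (simp add: sadd_def smult_emb_theta smult_dd_mon smult_emb_left smult_dd_theta pd_mult
          sum_distrib_left flip: sum.distrib)
         (intro sum.cong refl, simp add: algebra_simps pd_mult)
  qed
qed

lemma omega_emb: "in_polyring n c \<Longrightarrow> omega n (emb c)"
  by (auto simp: omega_def emb_def in_polyring_iff_vars_in)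

lemma omega_theta: "L \<subseteq> {1..n} \<Longrightarrow> omega n (theta L)"
  by (auto simp: omega_def theta_def in_polyring_iff_vars_in)

lemma omega_dd:
  assumes "in_polyring n c"
  shows "omega n (dd n c)"
  unfolding omega_def
proof (intro conjI allI impI)
  fix K assume "dd n c K \<noteq> 0"
  then obtain l where "l \<in> {1..n}" "(if K = {l} then pd l c else 0) \<noteq> 0"
    unfolding dd_eq_sum by (rule sum.not_neutral_contains_not_neutral)
  then show "K \<subseteq> {1..n}" by (auto split: if_splits)
next
  fix K show "in_polyring n (dd n c K)"
    using assms unfolding dd_eq_sum in_polyring_iff_vars_in
    by (intro vars_in_sum) (auto intro: vars_in_pd)
qed

lemma SI_B_sadd: "SI_B n F \<Longrightarrow> SI_B n G \<Longrightarrow> SI_B n (sadd F G)"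
proof (induction F rule: SI_B.induct)
  case zero
  then show ?case by (simp add: sadd_def szero_def)
next
  case (gen g a b F)
  have "sadd (sadd (smult a (smult g b)) F) G = sadd (smult a (smult g b)) (sadd F G)"
    by (simp add: sadd_def add.assoc)
  then show ?case using gen by (auto intro: SI_B.gen)
qed

lemma SI_B_generator_multiple:
  assumes "B_invariant n g" "const_term g = 0" "omega n a" "omega n b"
  shows "SI_B n (smult a (smult g b))"
proof -
  have "SI_B n (sadd (smult a (smult g b)) szero)"
    using assms by (intro SI_B.gen SI_B.zero)
  then show ?thesis by (simp add: sadd_szero)
qed

section \<open>The ideal of polynomials whose multiples lie in the superspace ideal\<close>

definition SI_poly :: "nat \<Rightarrow> mpoly \<Rightarrow> bool" where
  "SI_poly n f \<longleftrightarrow> (\<forall>c L. in_polyring n c \<longrightarrow> L \<subseteq> {1..n} \<longrightarrow>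
     SI_B n (smult (emb (c * f)) (theta L)) \<and> SI_B n (smult (dd n (c * f)) (theta L)))"

lemma SI_polyI_invariant:
  assumes "B_invariant n (emb f)" "const_term (emb f) = 0"
    and "B_invariant n (dd n f)" "const_term (dd n f) = 0"
    and "in_polyring n f"
  shows "SI_poly n f"
  unfolding SI_poly_def
proof (intro allI impI conjI)
  fix c L assume c: "in_polyring n c" and L: "L \<subseteq> {1..n}"
  have fin: "finite L" using L finite_subset by blast
  have "smult (emb (c * f)) (theta L) = smult (emb c) (smult (emb f) (theta L))"
    using fin by (simp add: smult_emb_theta smult_emb_mon)
  moreover have "SI_B n (smult (emb c) (smult (emb f) (theta L)))"
    using assms(1,2) c L by (intro SI_B_generator_multiple omega_emb omega_theta)
  ultimately show "SI_B n (smult (emb (c * f)) (theta L))" by simp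
  show "SI_B n (smult (dd n (c * f)) (theta L))"
    unfolding smult_dd_mult_theta[OF fin]
  proof (rule SI_B_sadd)
    show "SI_B n (smult (dd n c) (smult (emb f) (theta L)))"
      using assms(1,2) c L by (intro SI_B_generator_multiple omega_dd omega_theta)
    show "SI_B n (smult (emb c) (smult (dd n f) (theta L)))"
      using assms(3,4) c L by (intro SI_B_generator_multiple omega_emb omega_theta)
  qed
qed

lemma SI_poly_add:
  assumes "SI_poly n f" "SI_poly n g"
  shows "SI_poly n (f + g)"
  unfolding SI_poly_def
proof (intro allI impI conjI)
  fix c L assume c: "in_polyring n c" and L: "L \<subseteq> {1..n}"
  note f = assms(1)[unfolded SI_poly_def, rule_format, OF c L]
    and g = assms(2)[unfolded SI_poly_def, rule_format, OF c L]
  have fin: "finite L" using L finite_subset by blast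
  have "smult (emb (c * (f + g))) (theta L)
      = sadd (smult (emb (c * f)) (theta L)) (smult (emb (c * g)) (theta L))"
    using fin by (simp add: smult_emb_theta distrib_left mon_add)
  then show "SI_B n (smult (emb (c * (f + g))) (theta L))"
    using f g by (simp add: SI_B_sadd)
  have "smult (dd n (c * (f + g))) (theta L)
      = sadd (smult (dd n (c * f)) (theta L)) (smult (dd n (c * g)) (theta L))"
    using fin by (auto simp: smult_dd_theta sadd_def distrib_left pd_add fun_eq_iff
        simp flip: sum.distrib intro!: sum.cong)
  then show "SI_B n (smult (dd n (c * (f + g))) (theta L))"
    using f g by (simp add: SI_B_sadd)
qed

lemma SI_poly_mult:
  assumes "in_polyring n d" "SI_poly n f"
  shows "SI_poly n (d * f)"
  unfolding SI_poly_def
proof (intro allI impI)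
  fix c L assume "in_polyring n c" "L \<subseteq> {1..n}"
  moreover have "in_polyring n (c * d)"
    using assms(1) \<open>in_polyring n c\<close> by (simp add: in_polyring_iff_vars_in vars_in_mult)
  ultimately have "SI_B n (smult (emb ((c * d) * f)) (theta L))
      \<and> SI_B n (smult (dd n ((c * d) * f)) (theta L))"
    using assms(2) unfolding SI_poly_def by blast
  then show "SI_B n (smult (emb (c * (d * f))) (theta L))
      \<and> SI_B n (smult (dd n (c * (d * f))) (theta L))"
    by (simp add: mult.assoc)
qed

lemma SI_poly_diff_mult:
  assumes "in_polyring n d" "SI_poly n f" "SI_poly n g"
  shows "SI_poly n (f - d * g)"
proof -
  have "in_polyring n (- d)"
    using assms(1) by (simp add: in_polyring_iff_vars_in vars_in_uminus)
  then have "SI_poly n (f + (- d) * g)"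
    using assms(2,3) by (intro SI_poly_add SI_poly_mult)
  then show ?thesis by simp
qed

lemma SI_poly_h2:
  assumes full: "\<And>j. j \<ge> 1 \<Longrightarrow> SI_poly n (h2 (int j) {1..n})"
  shows "S \<subseteq> {1..n} \<Longrightarrow> j \<ge> 1 \<Longrightarrow> n < j + card S \<Longrightarrow> SI_poly n (h2 (int j) S)"
proof (induction "n - card S" arbitrary: S j)
  case 0
  then have "S = {1..n}"
    using card_mono[OF _ 0(2)] card_subset_eq[OF _ 0(2)] by simp
  then show ?case using full 0 by simp
next
  case (Suc d)
  have "card S < n" using Suc(2) by simp
  then have "S \<noteq> {1..n}" by auto
  then obtain t where t: "t \<in> {1..n}" "t \<notin> S" using Suc(3) by blast
  have fin: "finite S" using Suc(3) finite_subset by blast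
  have card_insert: "card (insert t S) = Suc (card S)" using fin t by simp
  have "j \<ge> 2" using Suc(4,5) \<open>card S < n\<close> by linarith
  have "SI_poly n (h2 (int j) (insert t S))"
    by (rule Suc(1)) (use Suc(2-5) card_insert t in auto)
  moreover have "SI_poly n (h2 (int (j - 1)) (insert t S))"
    by (rule Suc(1)) (use Suc(2-5) card_insert t \<open>j \<ge> 2\<close> in auto)
  moreover have "in_polyring n (Var t ^ 2)"
    using t by (simp add: in_polyring_iff_vars_in vars_in_power vars_in_Var)
  ultimately show ?case
    unfolding h2_insert_recurrence[OF fin t(2) Suc(4)] by (rule SI_poly_diff_mult[rotated])
qed

section \<open>Invariance of the generators under signed permutations\<close>

definition perm_index :: "(int \<Rightarrow> int) \<Rightarrow> nat \<Rightarrow> nat" where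
  "perm_index \<pi> i = nat \<bar>\<pi> (int i)\<bar>"

definition perm_sign :: "(int \<Rightarrow> int) \<Rightarrow> nat \<Rightarrow> mpoly" where
  "perm_sign \<pi> i = (if \<pi> (int i) > 0 then 1 else -1)"

lemma signed_perm_abs_range:
  assumes "signed_perm n \<pi>" "i \<in> {1..n}"
  shows "1 \<le> \<bar>\<pi> (int i)\<bar> \<and> \<bar>\<pi> (int i)\<bar> \<le> int n"
proof -
  have "int i \<in> {i. 1 \<le> \<bar>i\<bar> \<and> \<bar>i\<bar> \<le> int n}" using assms(2) by auto
  then show ?thesis
    using bij_betw_apply[OF conjunct1[OF assms(1)[unfolded signed_perm_def]]] by auto
qed

lemma perm_index_in: "signed_perm n \<pi> \<Longrightarrow> i \<in> {1..n} \<Longrightarrow> perm_index \<pi> i \<in> {1..n}"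
  using signed_perm_abs_range[of n \<pi> i] by (auto simp: perm_index_def)

lemma inj_on_perm_index:
  assumes "signed_perm n \<pi>"
  shows "inj_on (perm_index \<pi>) {1..n}"
proof
  fix i j assume i: "i \<in> {1..n}" and j: "j \<in> {1..n}" and eq: "perm_index \<pi> i = perm_index \<pi> j"
  let ?D = "{i. 1 \<le> \<bar>i\<bar> \<and> \<bar>i\<bar> \<le> int n}"
  have inj: "inj_on \<pi> ?D"
    using assms by (auto simp: signed_perm_def dest: bij_betw_imp_inj_on)
  have odd: "\<pi> (- int j) = - \<pi> (int j)"
    using assms j by (auto simp: signed_perm_def)
  have "\<bar>\<pi> (int i)\<bar> = \<bar>\<pi> (int j)\<bar>"
    using eq signed_perm_abs_range[OF assms i] signed_perm_abs_range[OF assms j]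
    by (simp add: perm_index_def)
  then have "\<pi> (int i) = \<pi> (int j) \<or> \<pi> (int i) = \<pi> (- int j)"
    using odd by (auto simp: abs_if split: if_splits)
  then have "int i = int j \<or> int i = - int j"
    using i j by (auto dest: inj_onD[OF inj])
  then show "i = j" using i j by auto
qed

lemma perm_index_image:
  assumes "signed_perm n \<pi>"
  shows "perm_index \<pi> ` {1..n} = {1..n}"
  by (rule endo_inj_surj) (use perm_index_in[OF assms] inj_on_perm_index[OF assms] in auto)

lemma xvar_signed_perm:
  "signed_perm n \<pi> \<Longrightarrow> i \<in> {1..n} \<Longrightarrow>
     xvar (\<pi> (int i)) = perm_sign \<pi> i * Var (perm_index \<pi> i)"
  using signed_perm_abs_range[of n \<pi> i] by (auto simp: xvar_def perm_sign_def perm_index_def)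

lemma thvar_signed_perm:
  "signed_perm n \<pi> \<Longrightarrow> i \<in> {1..n} \<Longrightarrow>
     thvar (\<pi> (int i)) K = perm_sign \<pi> i * theta {perm_index \<pi> i} K"
  using signed_perm_abs_range[of n \<pi> i]
  by (auto simp: thvar_def perm_sign_def perm_index_def sneg_def)

lemma signed_renaming_signed_perm:
  "signed_perm n \<pi> \<Longrightarrow>
     signed_renaming {1..n} (perm_index \<pi>) (perm_sign \<pi>) (\<lambda>i. xvar (\<pi> (int i)))"
  using inj_on_perm_index[of n \<pi>] xvar_signed_perm[of n \<pi>]
  by (auto simp: signed_renaming_def perm_sign_def)

lemma act_emb: "act n \<pi> (emb g) = emb (subst (\<lambda>i. xvar (\<pi> (int i))) g)"
proof
  fix K
  let ?\<sigma> = "\<lambda>i. xvar (\<pi> (int i))"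
  show "act n \<pi> (emb g) K = emb (subst ?\<sigma> g) K"
  proof (cases "finite K")
    case False
    then show ?thesis by (auto simp: act_def smult_infinite emb_def)
  next
    case True
    have "act n \<pi> (emb g) K = (\<Sum>J\<in>Pow {1..n}. if J = {} then subst ?\<sigma> g * theta {} K else 0)"
      unfolding act_def smult_emb_left[OF True] by (intro sum.cong refl) (auto simp: emb_def)
    also have "\<dots> = emb (subst ?\<sigma> g) K"
      by (simp add: theta_def emb_def)
    finally show ?thesis .
  qed
qed

lemma act_dd:
  assumes "finite K"
  shows "act n \<pi> (dd n f) K =
    (\<Sum>l\<in>{1..n}. subst (\<lambda>i. xvar (\<pi> (int i))) (pd l f) * thvar (\<pi> (int l)) K)"
proof -
  let ?\<sigma> = "\<lambda>i. xvar (\<pi> (int i))"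
  let ?t = "\<lambda>l. subst ?\<sigma> (pd l f) * thvar (\<pi> (int l)) K"
  have "act n \<pi> (dd n f) K = (\<Sum>J\<in>Pow {1..n}. \<Sum>l\<in>{1..n}. if J = {l} then ?t l else 0)"
    unfolding act_def
  proof (intro sum.cong refl)
    fix J
    show "smult (emb (subst ?\<sigma> (dd n f J)))
        (foldr smult (map (\<lambda>j. thvar (\<pi> (int j))) (sorted_list_of_set J)) (theta {})) K
       = (\<Sum>l\<in>{1..n}. if J = {l} then ?t l else 0)"
    proof (cases "\<exists>l\<in>{1..n}. J = {l}")
      case True
      then obtain l where l: "l \<in> {1..n}" "J = {l}" by blast
      then have "dd n f J = pd l f"
        by (simp add: dd_eq_sum)
      then show ?thesis
        using l assms by (simp add: smult_emb_left smult_theta_empty_right)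
    next
      case False
      then have "dd n f J = 0" unfolding dd_eq_sum by (intro sum.neutral) auto
      with False show ?thesis
        unfolding smult_emb_left[OF assms] by (auto intro!: sum.neutral[symmetric])
    qed
  qed
  also have "\<dots> = (\<Sum>l\<in>{1..n}. \<Sum>J\<in>Pow {1..n}. if J = {l} then ?t l else 0)"
    by (rule sum.swap)
  also have "\<dots> = (\<Sum>l\<in>{1..n}. ?t l)"
    by (intro sum.cong refl) simp
  finally show ?thesis .
qed

lemma subst_h2_signed_perm:
  assumes "signed_perm n \<pi>"
  shows "subst (\<lambda>i. xvar (\<pi> (int i))) (h2 (int j) {1..n}) = h2 (int j) {1..n}"
proof -
  have "subst (\<lambda>i. xvar (\<pi> (int i))) (h2 (int j) {1..n}) = h2 (int j) (perm_index \<pi> ` {1..n})"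
    by (rule h2_subst_signed_renaming[OF signed_renaming_signed_perm[OF assms]]) auto
  then show ?thesis by (simp only: perm_index_image[OF assms])
qed

lemma in_polyring_h2: "in_polyring n (h2 (int j) {1..n})"
  by (simp add: in_polyring_iff_vars_in vars_in_h2)

lemma B_invariant_emb_h2: "B_invariant n (emb (h2 (int j) {1..n}))"
proof -
  have "act n \<pi> (emb (h2 (int j) {1..n})) = emb (h2 (int j) {1..n})" if "signed_perm n \<pi>" for \<pi>
    unfolding act_emb subst_h2_signed_perm[OF that] ..
  then show ?thesis
    unfolding B_invariant_def using omega_emb[OF in_polyring_h2] by blast
qed

lemma B_invariant_dd_h2: "B_invariant n (dd n (h2 (int j) {1..n}))"
  unfolding B_invariant_def
proof (intro conjI allI impI ext)
  let ?h = "h2 (int j) {1..n}"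
  show "omega n (dd n ?h)" by (rule omega_dd[OF in_polyring_h2])
  fix \<pi> K assume \<pi>: "signed_perm n \<pi>"
  let ?\<sigma> = "\<lambda>i. xvar (\<pi> (int i))" and ?\<tau> = "perm_index \<pi>" and ?e = "perm_sign \<pi>"
  show "act n \<pi> (dd n ?h) K = dd n ?h K"
  proof (cases "finite K")
    case False
    then show ?thesis by (auto simp: act_def smult_infinite dd_eq_sum intro!: sum.neutral)
  next
    case True
    have summand: "subst ?\<sigma> (pd l ?h) * thvar (\<pi> (int l)) K = pd (?\<tau> l) ?h * theta {?\<tau> l} K"
      if l: "l \<in> {1..n}" for l
    proof -
      have "pd (?\<tau> l) ?h = ?e l * subst ?\<sigma> (pd l ?h)"
        using pd_subst_h2_signed_renaming[OF signed_renaming_signed_perm[OF \<pi>] order_refl l]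
        by (simp only: subst_h2_signed_perm[OF \<pi>])
      moreover have "?e l * ?e l = 1"
        by (simp add: perm_sign_def)
      ultimately have "subst ?\<sigma> (pd l ?h) = ?e l * pd (?\<tau> l) ?h"
        by (metis mult.assoc mult_1)
      then show ?thesis
        using \<open>?e l * ?e l = 1\<close> by (simp add: thvar_signed_perm[OF \<pi> l] mult_ac)
    qed
    have "act n \<pi> (dd n ?h) K = (\<Sum>l\<in>{1..n}. pd (?\<tau> l) ?h * theta {?\<tau> l} K)"
      using act_dd[OF True] summand by simp
    also have "\<dots> = (\<Sum>t\<in>?\<tau> ` {1..n}. pd t ?h * theta {t} K)"
      by (rule sum.reindex[OF inj_on_perm_index[OF \<pi>], symmetric, unfolded comp_def])
    also have "\<dots> = dd n ?h K"
      unfolding perm_index_image[OF \<pi>] dd_eq_sum by (intro sum.cong refl) (simp add: theta_def)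
    finally show ?thesis .
  qed
qed

lemma SI_poly_h2_full: "j \<ge> 1 \<Longrightarrow> SI_poly n (h2 (int j) {1..n})"
  by (rule SI_polyI_invariant[OF B_invariant_emb_h2 _ B_invariant_dd_h2 _ in_polyring_h2])
     (auto simp: const_term_def emb_def dd_eq_sum lookup_h2_0)

section \<open>Gale order\<close>

lemma set_take_sorted_list_of_set:
  assumes "finite A" "s < card A"
  shows "set (take s (sorted_list_of_set A)) = {a\<in>A. a < sorted_list_of_set A ! s}"
proof -
  define xs where "xs = sorted_list_of_set A"
  have strict: "sorted_wrt (<) xs" and len: "s < length xs" and set_xs: "set xs = A"
    using assms by (auto simp: xs_def)
  have "a \<in> set (take s xs) \<longleftrightarrow> a \<in> A \<and> a < xs ! s" for a
  proof
    assume "a \<in> set (take s xs)"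
    then obtain k where "k < s" "a = xs ! k"
      using len by (auto simp: in_set_conv_nth)
    then show "a \<in> A \<and> a < xs ! s"
      using len set_xs sorted_wrt_nth_less[OF strict] by auto
  next
    assume a: "a \<in> A \<and> a < xs ! s"
    then obtain k where k: "k < length xs" "a = xs ! k"
      using set_xs by (auto simp: in_set_conv_nth)
    have "k < s"
    proof (rule ccontr)
      assume "\<not> k < s"
      then have "xs ! s \<le> xs ! k"
        using strict k(1) by (auto simp: sorted_wrt_nth_less sorted_nth_mono strict_sorted_iff)
      then show False using a k(2) by (simp add: leD)
    qed
    then show "a \<in> set (take s xs)"
      using k by (auto simp: in_set_conv_nth)
  qed
  then show ?thesis by (auto simp: xs_def)
qed

lemma sorted_list_of_set_nth_le_iff:
  assumes "finite A" "s < card A"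
  shows "sorted_list_of_set A ! s \<le> x \<longleftrightarrow> s < card {a\<in>A. a \<le> (x :: nat)}"
proof -
  let ?y = "sorted_list_of_set A ! s"
  have "card {a\<in>A. a < ?y} = card (set (take s (sorted_list_of_set A)))"
    using set_take_sorted_list_of_set[OF assms] by simp
  also have "\<dots> = s"
    using assms by (simp add: distinct_card)
  finally have card_less: "card {a\<in>A. a < ?y} = s" .
  show ?thesis
  proof (cases "?y \<le> x")
    case True
    have "?y \<in> A"
      using assms by (metis nth_mem length_sorted_list_of_set set_sorted_list_of_set)
    have "Suc s = card (insert ?y {a\<in>A. a < ?y})"
      using card_less assms(1) by simp
    also have "\<dots> \<le> card {a\<in>A. a \<le> x}"
      using True \<open>?y \<in> A\<close> assms(1) by (intro card_mono) auto
    finally show ?thesis using True by simp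
  next
    case False
    have "card {a\<in>A. a \<le> x} \<le> card {a\<in>A. a < ?y}"
      using False assms(1) by (intro card_mono) auto
    then show ?thesis using False card_less by simp
  qed
qed

lemma galeI_card_le:
  assumes "finite A" "finite B" "card A = card B"
    and "\<And>x. card {b\<in>B. b \<le> x} \<le> card {a\<in>A. a \<le> (x :: nat)}"
  shows "gale A B"
  unfolding gale_def
proof (intro conjI allI impI)
  fix s assume s: "s < card A"
  let ?b = "sorted_list_of_set B ! s"
  have "s < card {b\<in>B. b \<le> ?b}"
    using sorted_list_of_set_nth_le_iff[OF assms(2), of s ?b] s assms(3) by simp
  then have "s < card {a\<in>A. a \<le> ?b}"
    using assms(4)[of ?b] by linarith
  then show "sorted_list_of_set A ! s \<le> ?b"
    using sorted_list_of_set_nth_le_iff[OF assms(1) s] by simp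
qed (rule assms(3))

lemma gale_refl: "gale J J"
  by (simp add: gale_def)

lemma gale_exchange:
  assumes "finite J" "i \<in> J" "l \<notin> J" "i \<le> l"
  shows "gale J (insert l (J - {i}))"
proof (rule galeI_card_le)
  have "card J > 0"
    using assms(1,2) card_gt_0_iff by blast
  then show "card J = card (insert l (J - {i}))"
    using assms(1-3) by (simp add: card_Diff_singleton)
  fix x :: nat
  show "card {b\<in>insert l (J - {i}). b \<le> x} \<le> card {a\<in>J. a \<le> x}"
  proof (cases "l \<le> x")
    case True
    then have "{b\<in>insert l (J - {i}). b \<le> x} = insert l ({a\<in>J. a \<le> x} - {i})"
      by auto
    moreover have "i \<in> {a\<in>J. a \<le> x}"
      using assms(2,4) True by auto
    moreover have "card {a\<in>J. a \<le> x} > 0"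
      using calculation(2) assms(1) card_gt_0_iff by fastforce
    ultimately show ?thesis
      using assms(1,3) by (simp add: card_Diff_singleton)
  next
    case False
    then have "{b\<in>insert l (J - {i}). b \<le> x} \<subseteq> {a\<in>J. a \<le> x}"
      by auto
    then show ?thesis
      using assms(1) by (intro card_mono) auto
  qed
qed (use assms(1) in auto)

lemma SI_poly_qq_polynomial:
  assumes "J \<subseteq> {1..n}" "1 \<le> i"
  shows "SI_poly n (h2 (rr n J i) (J \<union> {i..n}))"
proof -
  let ?S = "J \<union> {i..n}"
  have S: "?S \<subseteq> {1..n}"
    using assms by auto
  then have "card ?S \<le> n"
    using card_mono[of "{1..n}" ?S] by simp
  then have "rr n J i = int (n - card ?S + 1)"
    by (simp add: rr_def)
  moreover have "SI_poly n (h2 (int (n - card ?S + 1)) ?S)"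
    by (rule SI_poly_h2[OF SI_poly_h2_full S]) (use \<open>card ?S \<le> n\<close> in auto)
  ultimately show ?thesis by simp
qed

lemma qq_not_mem: "i \<notin> J \<Longrightarrow> finite J \<Longrightarrow> qq n J i = mon J (pp n J i)"
  by (simp add: qq_def pp_def smult_emb_theta)

lemma qq_mem:
  "i \<in> J \<Longrightarrow> finite J \<Longrightarrow> qq n J i K =
     (\<Sum>l\<in>{1..n}. if l \<in> K \<and> K - {l} = J - {i}
        then of_int (ssign {l} (J - {i})) * pd l (h2 (rr n J i) (J \<union> {i..n})) else 0)"
  by (simp add: qq_def smult_dd_theta)

lemma SI_B_qq:
  assumes "J \<subseteq> {1..n}" "1 \<le> i"
  shows "SI_B n (qq n J i)"
proof -
  let ?h = "h2 (rr n J i) (J \<union> {i..n})"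
  have "in_polyring n 1"
    by (simp add: in_polyring_iff_vars_in)
  then have "SI_B n (smult (emb (1 * ?h)) (theta L)) \<and> SI_B n (smult (dd n (1 * ?h)) (theta L))"
    if "L \<subseteq> {1..n}" for L
    using SI_poly_qq_polynomial[OF assms] that unfolding SI_poly_def by blast
  moreover have "J - {i} \<subseteq> {1..n}"
    using assms(1) by auto
  ultimately show ?thesis
    using assms(1) by (simp add: qq_def)
qed

lemma qq_support:
  assumes "J \<subseteq> {1..n}" "qq n J i K \<noteq> 0"
  shows "K \<subseteq> {1..n} \<and> gale J K"
proof (cases "i \<in> J")
  case False
  then show ?thesis
    using assms finite_subset[OF assms(1)]
    by (auto simp: qq_not_mem mon_def gale_refl split: if_splits)
next
  case True
  let ?S = "J \<union> {i..n}"
  have fin: "finite J"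
    using assms(1) finite_subset by blast
  obtain l where l: "l \<in> {1..n}" "l \<in> K" "K - {l} = J - {i}" "pd l (h2 (rr n J i) ?S) \<noteq> 0"
    using assms(2) unfolding qq_mem[OF True fin]
    by (rule sum.not_neutral_contains_not_neutral) (auto split: if_splits)
  have "l \<in> ?S"
  proof (rule ccontr)
    assume "l \<notin> ?S"
    then have "pd l (h2 (rr n J i) ?S) = 0"
      by (intro pd_eq_0_if_not_vars_in[of ?S] vars_in_h2) auto
    with l(4) show False by simp
  qed
  have K: "K = insert l (J - {i})"
    using l(2,3) by auto
  show ?thesis
  proof (cases "l = i")
    case True
    then show ?thesis
      using K \<open>i \<in> J\<close> assms(1) gale_refl by (simp add: insert_absorb)
  next
    case False
    then have "l \<notin> J" "i \<le> l"
      using l(3) \<open>l \<in> ?S\<close> by auto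
    then show ?thesis
      unfolding K using gale_exchange[OF fin \<open>i \<in> J\<close>] assms(1) l(1) by auto
  qed
qed

lemma of_int_ssign_cases:
  "of_int (ssign I J) = (1 :: 'a :: ring_1) \<or> of_int (ssign I J) = (-1 :: 'a)"
  unfolding ssign_def by (cases "even (card {(a, b). a \<in> I \<and> b \<in> J \<and> b < a})") auto

lemma qq_diagonal:
  assumes "J \<subseteq> {1..n}"
  shows "qq n J i J = pp n J i \<or> qq n J i J = - pp n J i"
proof (cases "i \<in> J")
  case False
  then show ?thesis
    using finite_subset[OF assms] by (simp add: qq_not_mem mon_def)
next
  case True
  let ?t = "of_int (ssign {i} (J - {i})) * pd i (h2 (rr n J i) (J \<union> {i..n}))"
  have "qq n J i J = (\<Sum>l\<in>{1..n}. if l = i then ?t else 0)"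
    unfolding qq_mem[OF True finite_subset[OF assms finite_atLeastAtMost]] using True
    by (intro sum.cong refl) auto
  also have "\<dots> = of_int (ssign {i} (J - {i})) * pp n J i"
    using True assms by (auto simp: pp_def)
  finally have "qq n J i J = of_int (ssign {i} (J - {i})) * pp n J i" .
  then show ?thesis
    using of_int_ssign_cases[of "{i}" "J - {i}", where 'a = mpoly] by (metis mult_1 mult_minus1)
qed

theorem mainTheorem2:
  fixes n i :: nat and J :: "nat set"
  assumes "n \<ge> 1" and "J \<subseteq> {1..n}" and "i \<in> {1..n}"
  shows "SI_B n (qq n J i)
       \<and> (\<forall>K. qq n J i K \<noteq> 0 \<longrightarrow> K \<subseteq> {1..n} \<and> card K = card J \<and> gale J K)
       \<and> (qq n J i J = pp n J i \<or> qq n J i J = - pp n J i)"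
  using SI_B_qq[of J n i] qq_support[of J n i] qq_diagonal[of J n i] assms
  by (auto simp: gale_def)

end
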